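(* Let $f:\mathbb H\to\mathbb C$ be continuous. Suppose that for every closed rectangle $R=[a,b]\times[c,d]\subset\mathbb H$ (with $0<a<b$, $c<d$) we have $$\int_{\partial R} f(r,\theta)\,e^{i\theta}\,(dr+ir\,d\theta)=0,$$ where $\partial R$ is the boundary of $R$ traversed once. Then $f$ is polar-analytic on $\mathbb H$.
   Context: $\mathbb H:=\{(r,\theta): r>0,\ \theta\in\mathbb R\}$. A function $f:\mathbb H\to\mathbb C$ is called polar-analytic on $\mathbb H$ if for every $(r_0,\theta_0)\in\mathbb H$ the limit $$(D_{\rm pol}f)(r_0,\theta_0):=\lim_{(r,\theta)\to(r_0,\theta_0)}\frac{f(r,\theta)-f(r_0,\theta_0)}{re^{i\theta}-r_0e^{i\theta_0}}$$ exists (with $re^{i\theta}\neq r_0e^{i\theta_0}$), independently of how $(r,\theta)$ approaches $(r_0,\theta_0)$ within $\mathbb H$. For a piecewise $C^1$ curve $t\mapsto(r(t),\theta(t))$, $t\in[\alpha,\beta]$, the line integral means $\int_\alpha^\beta f(r(t),\theta(t))e^{i\theta(t)}\big(r'(t)+ir(t)\theta'(t)\big)\,dt$. *)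

theory Defs
  imports "HOL-Analysis.Analysis"
begin

definition polar_H :: "(real \<times> real) set" where
  "polar_H = {p. fst p > 0}"

definition polar_pt :: "real \<times> real \<Rightarrow> complex" where
  "polar_pt p = complex_of_real (fst p) * cis (snd p)"

definition polar_analytic :: "(real \<times> real \<Rightarrow> complex) \<Rightarrow> bool" where
  "polar_analytic f \<longleftrightarrow>
     (\<forall>p0\<in>polar_H. \<exists>L. ((\<lambda>p. (f p - f p0) / (polar_pt p - polar_pt p0)) \<longlongrightarrow> L)
        (at p0 within {p\<in>polar_H. polar_pt p \<noteq> polar_pt p0}))"

definition polar_line_integral ::
  "(real \<times> real \<Rightarrow> complex) \<Rightarrow> (real \<Rightarrow> real) \<Rightarrow> (real \<Rightarrow> real) \<Rightarrow> real \<Rightarrow> real \<Rightarrow> complex" where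
  "polar_line_integral f r th \<alpha> \<beta> =
     integral {\<alpha>..\<beta>} (\<lambda>t. f (r t, th t) * cis (th t) *
        (complex_of_real (deriv r t) + \<i> * complex_of_real (r t * deriv th t)))"

definition polar_rect_boundary_integral ::
  "(real \<times> real \<Rightarrow> complex) \<Rightarrow> real \<Rightarrow> real \<Rightarrow> real \<Rightarrow> real \<Rightarrow> complex" where
  "polar_rect_boundary_integral f a b c d =
      polar_line_integral f (\<lambda>t. a + t * (b - a)) (\<lambda>t. c) 0 1
    + polar_line_integral f (\<lambda>t. b) (\<lambda>t. c + t * (d - c)) 0 1
    + polar_line_integral f (\<lambda>t. b + t * (a - b)) (\<lambda>t. d) 0 1
    + polar_line_integral f (\<lambda>t. a) (\<lambda>t. d + t * (c - d)) 0 1"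

end

theory Submission
  imports Defs "HOL-Complex_Analysis.Complex_Analysis"
begin

(*
  In the log-polar coordinate w = ln r + i\<theta> the form f(r,\<theta>) e^(i\<theta>) (dr + i r d\<theta>) becomes
  g(w) dw with g(w) = f(e^(Re w), Im w) e^w. Integrating this form from (1,0) first along the ray
  \<theta> = 0 and then along an arc r = const gives a function G(r,\<theta>); the vanishing of all rectangle
  integrals makes the increment of G independent of the path, so that, together with the continuity
  of f, w \<mapsto> G(e^(Re w), Im w) is complex differentiable with derivative g. Hence g is holomorphic,
  and so is h(w) = f(e^(Re w), Im w) = g(w) e^(-w). Finally the polar difference quotient of f at
  p0 is the quotient of the difference quotients of h and of exp at w0 = ln r0 + i\<theta>0, which
  converges to h'(w0) / e^w0.
*)

text \<open>The oriented integral of \<open>\<phi>\<close> from \<open>u\<close> to \<open>v\<close>, taken as a contour integral along the real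
  segment so that orientation, additivity and estimates come from the contour-integral library.\<close>

definition segment_integral :: "(real \<Rightarrow> complex) \<Rightarrow> real \<Rightarrow> real \<Rightarrow> complex" where
  "segment_integral \<phi> u v = contour_integral (linepath (of_real u) (of_real v)) (\<lambda>z. \<phi> (Re z))"

lemma Re_image_closed_segment_of_real:
  "Re ` closed_segment (complex_of_real u) (of_real v) = closed_segment u v"
  by (simp add: closed_segment_of_real image_image)

lemma continuous_on_closed_segment_of_real_Re:
  assumes "continuous_on (closed_segment u v) \<phi>"
  shows "continuous_on (closed_segment (of_real u) (of_real v)) (\<lambda>z. \<phi> (Re z))"
  by (rule continuous_on_compose2[OF assms continuous_on_Re[OF continuous_on_id]])
     (simp add: Re_image_closed_segment_of_real)

lemma segment_integrable:
  "continuous_on (closed_segment u v) \<phi> \<Longrightarrow>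
    (\<lambda>z. \<phi> (Re z)) contour_integrable_on linepath (of_real u) (of_real v)"
  by (intro contour_integrable_continuous_linepath continuous_on_closed_segment_of_real_Re)

lemma segment_integral_eq_integral:
  "segment_integral \<phi> u v = integral {0..1} (\<lambda>t. \<phi> (u + t * (v - u)) * of_real (v - u))"
proof -
  have "Re (linepath (complex_of_real u) (of_real v) t) = u + t * (v - u)" for t
    by (simp add: linepath_def algebra_simps)
  then show ?thesis
    unfolding segment_integral_def contour_integral_integral by simp
qed

lemma segment_integral_refl [simp]: "segment_integral \<phi> u u = 0"
  by (simp add: segment_integral_def)

lemma segment_integral_reverse: "segment_integral \<phi> v u = - segment_integral \<phi> u v"
  unfolding segment_integral_def
  by (metis contour_integral_reversepath reversepath_linepath valid_path_linepath)

lemma segment_integral_split: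
  assumes "continuous_on (closed_segment u v) \<phi>" and "w \<in> closed_segment u v"
  shows "segment_integral \<phi> u v = segment_integral \<phi> u w + segment_integral \<phi> w v"
  unfolding segment_integral_def
  using assms by (intro contour_integral_split_linepath continuous_on_closed_segment_of_real_Re)
    (auto simp: closed_segment_of_real)

lemma segment_integral_add:
  assumes "continuous_on S \<phi>" and "closed_segment u v \<subseteq> S" "closed_segment v w \<subseteq> S"
    "closed_segment u w \<subseteq> S"
  shows "segment_integral \<phi> u v + segment_integral \<phi> v w = segment_integral \<phi> u w"
proof -
  have cont: "continuous_on (closed_segment a b) \<phi>" if "closed_segment a b \<subseteq> S" for a b
    using assms(1) that continuous_on_subset by blast
  consider "v \<in> closed_segment u w" | "w \<in> closed_segment u v" | "u \<in> closed_segment v w"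
    unfolding closed_segment_eq_real_ivl by (cases "u \<le> v"; cases "v \<le> w"; cases "u \<le> w") auto
  then show ?thesis
  proof cases
    case 1
    then show ?thesis using segment_integral_split[OF cont[OF assms(4)]] by simp
  next
    case 2
    then show ?thesis
      using segment_integral_split[OF cont[OF assms(2)]] segment_integral_reverse[of \<phi> v w] by simp
  next
    case 3
    then show ?thesis
      using segment_integral_split[OF cont[OF assms(3)]] segment_integral_reverse[of \<phi> v u] by simp
  qed
qed

lemma segment_integral_diff:
  assumes "continuous_on (closed_segment u v) \<phi>" "continuous_on (closed_segment u v) \<psi>"
  shows "segment_integral (\<lambda>s. \<phi> s - \<psi> s) u v = segment_integral \<phi> u v - segment_integral \<psi> u v"
  unfolding segment_integral_def
  by (rule contour_integral_diff) (use assms segment_integrable in blast)+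

lemma segment_integral_mult_left:
  "continuous_on (closed_segment u v) \<phi> \<Longrightarrow>
    segment_integral (\<lambda>s. c * \<phi> s) u v = c * segment_integral \<phi> u v"
  unfolding segment_integral_def by (intro contour_integral_lmul segment_integrable)

lemma segment_integral_const: "segment_integral (\<lambda>s. c) u v = c * of_real (v - u)"
  by (simp add: segment_integral_def)

lemma segment_integral_bound:
  assumes "continuous_on (closed_segment u v) \<phi>"
    and "\<And>s. s \<in> closed_segment u v \<Longrightarrow> norm (\<phi> s) \<le> B"
  shows "norm (segment_integral \<phi> u v) \<le> B * \<bar>v - u\<bar>"
proof -
  have "0 \<le> B"
    using assms(2)[of u] norm_ge_zero order_trans by blast
  then have "norm (segment_integral \<phi> u v) \<le> B * norm (complex_of_real v - of_real u)"
    unfolding segment_integral_def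
    by (intro contour_integral_bound_linepath segment_integrable assms)
       (auto simp: closed_segment_of_real)
  then show ?thesis
    by (metis norm_of_real of_real_diff)
qed

lemma segment_integral_cis: "segment_integral cis u v = - \<i> * (cis v - cis u)"
proof -
  have "((\<lambda>z. - \<i> * exp (\<i> * z)) has_field_derivative exp (\<i> * z)) (at z within UNIV)" for z
    by (auto intro!: derivative_eq_intros simp: mult.assoc)
  from contour_integral_primitive[OF this, of "linepath (of_real u) (of_real v)"]
  have "((\<lambda>z. exp (\<i> * z)) has_contour_integral - \<i> * (cis v - cis u))
      (linepath (of_real u) (of_real v))"
    by (simp add: cis_conv_exp algebra_simps)
  moreover have "exp (\<i> * z) = cis (Re z)"
    if "z \<in> path_image (linepath (complex_of_real u) (of_real v))" for z
    using that by (auto simp: closed_segment_of_real cis_conv_exp)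
  ultimately show ?thesis
    unfolding segment_integral_def
    by (metis (no_types, lifting) contour_integral_unique has_contour_integral_eq)
qed

definition polar_radial_integral :: "(real \<times> real \<Rightarrow> complex) \<Rightarrow> real \<Rightarrow> real \<Rightarrow> real \<Rightarrow> complex" where
  "polar_radial_integral f \<theta> a b = segment_integral (\<lambda>s. f (s, \<theta>) * cis \<theta>) a b"

definition polar_angular_integral :: "(real \<times> real \<Rightarrow> complex) \<Rightarrow> real \<Rightarrow> real \<Rightarrow> real \<Rightarrow> complex" where
  "polar_angular_integral f r c d = segment_integral (\<lambda>t. f (r, t) * cis t * (\<i> * of_real r)) c d"

lemma continuous_on_polar_H_ray:
  assumes "continuous_on polar_H f" and "S \<subseteq> {0<..}"
  shows "continuous_on S (\<lambda>s. f (s, \<theta>))"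
  by (rule continuous_on_compose2[OF assms(1)]) (use assms(2) in \<open>auto intro!: continuous_intros simp: polar_H_def\<close>)

lemma continuous_on_polar_H_circle:
  assumes "continuous_on polar_H f" and "0 < r"
  shows "continuous_on S (\<lambda>t. f (r, t))"
  by (rule continuous_on_compose2[OF assms(1)]) (use assms(2) in \<open>auto intro!: continuous_intros simp: polar_H_def\<close>)

lemma closed_segment_subset_pos: "0 < a \<Longrightarrow> 0 < b \<Longrightarrow> closed_segment a b \<subseteq> {0::real<..}"
  by (auto simp: closed_segment_eq_real_ivl)

lemma deriv_linear_path: "deriv (\<lambda>t. x + t * (y - x)) t = y - (x::real)"
  by (rule DERIV_imp_deriv) (auto intro!: derivative_eq_intros)

lemma polar_line_integral_radial:
  "polar_line_integral f (\<lambda>t. a + t * (b - a)) (\<lambda>t. \<theta>) 0 1 = polar_radial_integral f \<theta> a b"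
  unfolding polar_line_integral_def polar_radial_integral_def segment_integral_eq_integral deriv_linear_path
  by simp

lemma polar_line_integral_angular:
  "polar_line_integral f (\<lambda>t. r) (\<lambda>t. c + t * (d - c)) 0 1 = polar_angular_integral f r c d"
  unfolding polar_line_integral_def polar_angular_integral_def segment_integral_eq_integral deriv_linear_path
  by (simp add: algebra_simps)

lemma polar_rect_boundary_integral_eq_sides:
  "polar_rect_boundary_integral f a b c d =
     polar_radial_integral f c a b + polar_angular_integral f b c d
   + polar_radial_integral f d b a + polar_angular_integral f a d c"
  unfolding polar_rect_boundary_integral_def polar_line_integral_radial polar_line_integral_angular ..

lemma polar_radial_integral_reverse: "polar_radial_integral f \<theta> b a = - polar_radial_integral f \<theta> a b"
  unfolding polar_radial_integral_def by (rule segment_integral_reverse)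

lemma polar_angular_integral_reverse: "polar_angular_integral f r d c = - polar_angular_integral f r c d"
  unfolding polar_angular_integral_def by (rule segment_integral_reverse)

lemma polar_rect_boundary_integral_swap_radii:
  "polar_rect_boundary_integral f b a c d = - polar_rect_boundary_integral f a b c d"
  by (simp add: polar_rect_boundary_integral_eq_sides polar_radial_integral_reverse[of f _ b a]
      polar_angular_integral_reverse[of f _ d c])

lemma polar_rect_boundary_integral_swap_angles:
  "polar_rect_boundary_integral f a b d c = - polar_rect_boundary_integral f a b c d"
  by (simp add: polar_rect_boundary_integral_eq_sides polar_radial_integral_reverse[of f _ b a]
      polar_angular_integral_reverse[of f _ d c])

lemma polar_rect_boundary_integral_same_radii: "polar_rect_boundary_integral f a a c d = 0"
  by (simp add: polar_rect_boundary_integral_eq_sides polar_radial_integral_def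
      polar_angular_integral_reverse[of f _ d c])

lemma polar_rect_boundary_integral_same_angles: "polar_rect_boundary_integral f a b c c = 0"
  by (simp add: polar_rect_boundary_integral_eq_sides polar_angular_integral_def
      polar_radial_integral_reverse[of f _ b a])

lemma polar_rect_boundary_integral_eq_0:
  assumes rect: "\<And>a b c d. 0 < a \<Longrightarrow> a < b \<Longrightarrow> c < d \<Longrightarrow> polar_rect_boundary_integral f a b c d = 0"
    and "0 < a" "0 < b"
  shows "polar_rect_boundary_integral f a b c d = 0"
proof -
  have ordered_angles: "polar_rect_boundary_integral f a b c d = 0" if "c < d" for c d
    using rect[of a b c d] rect[of b a c d] assms(2,3) that
      polar_rect_boundary_integral_same_radii[of f a c d] polar_rect_boundary_integral_swap_radii[of f b a c d]
    by (cases a b rule: linorder_cases) auto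
  show ?thesis
    using ordered_angles[of c d] ordered_angles[of d c]
      polar_rect_boundary_integral_same_angles[of f a b c] polar_rect_boundary_integral_swap_angles[of f a b c d]
    by (cases c d rule: linorder_cases) auto
qed

lemma polar_radial_integral_diff:
  assumes "continuous_on polar_H f" "continuous_on polar_H g" "0 < a" "0 < b"
  shows "polar_radial_integral (\<lambda>p. f p - g p) \<theta> a b = polar_radial_integral f \<theta> a b - polar_radial_integral g \<theta> a b"
  unfolding polar_radial_integral_def left_diff_distrib
  using assms closed_segment_subset_pos[of a b]
  by (intro segment_integral_diff continuous_intros continuous_on_polar_H_ray) auto

lemma polar_angular_integral_diff:
  assumes "continuous_on polar_H f" "continuous_on polar_H g" "0 < r"
  shows "polar_angular_integral (\<lambda>p. f p - g p) r c d = polar_angular_integral f r c d - polar_angular_integral g r c d"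
  unfolding polar_angular_integral_def left_diff_distrib
  using assms by (intro segment_integral_diff continuous_intros continuous_on_polar_H_circle)

lemma polar_radial_integral_const: "polar_radial_integral (\<lambda>p. c) \<theta> a b = c * cis \<theta> * of_real (b - a)"
  by (simp add: polar_radial_integral_def segment_integral_const)

lemma polar_angular_integral_const:
  "polar_angular_integral (\<lambda>p. c) r u v = c * of_real r * (cis v - cis u)"
proof -
  have "polar_angular_integral (\<lambda>p. c) r u v = segment_integral (\<lambda>t. (c * \<i> * of_real r) * cis t) u v"
    unfolding polar_angular_integral_def by (simp add: ac_simps)
  also have "\<dots> = (c * \<i> * of_real r) * (- \<i> * (cis v - cis u))"
    by (simp add: segment_integral_mult_left continuous_on_cis segment_integral_cis)
  also have "\<dots> = c * of_real r * (cis v - cis u)"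
    by (simp add: mult_ac)
  finally show ?thesis .
qed

lemma polar_radial_integral_bound:
  assumes "continuous_on polar_H f" "0 < a" "0 < b"
    and "\<And>s. s \<in> closed_segment a b \<Longrightarrow> norm (f (s, \<theta>)) \<le> B"
  shows "norm (polar_radial_integral f \<theta> a b) \<le> B * \<bar>b - a\<bar>"
  unfolding polar_radial_integral_def
proof (rule segment_integral_bound)
  show "continuous_on (closed_segment a b) (\<lambda>s. f (s, \<theta>) * cis \<theta>)"
    using assms closed_segment_subset_pos[of a b] by (intro continuous_intros continuous_on_polar_H_ray) auto
  show "norm (f (s, \<theta>) * cis \<theta>) \<le> B" if "s \<in> closed_segment a b" for s
    using assms(4)[OF that] by (simp add: norm_mult)
qed

lemma polar_angular_integral_bound:
  assumes "continuous_on polar_H f" "0 < r"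
    and "\<And>t. t \<in> closed_segment c d \<Longrightarrow> norm (f (r, t)) \<le> B"
  shows "norm (polar_angular_integral f r c d) \<le> B * r * \<bar>d - c\<bar>"
  unfolding polar_angular_integral_def
proof (rule segment_integral_bound)
  show "continuous_on (closed_segment c d) (\<lambda>t. f (r, t) * cis t * (\<i> * of_real r))"
    using assms by (intro continuous_intros continuous_on_polar_H_circle)
  show "norm (f (r, t) * cis t * (\<i> * of_real r)) \<le> B * r" if "t \<in> closed_segment c d" for t
    using assms(2) assms(3)[OF that] by (simp add: norm_mult)
qed

definition polar_primitive :: "(real \<times> real \<Rightarrow> complex) \<Rightarrow> real \<times> real \<Rightarrow> complex" where
  "polar_primitive f p = polar_radial_integral f 0 1 (fst p) + polar_angular_integral f (fst p) 0 (snd p)"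

lemma polar_primitive_diff:
  assumes cont: "continuous_on polar_H f"
    and closed: "\<And>a b c d. 0 < a \<Longrightarrow> 0 < b \<Longrightarrow> polar_rect_boundary_integral f a b c d = 0"
    and "0 < r1" "0 < r2"
  shows "polar_primitive f (r2, t2) - polar_primitive f (r1, t1)
    = polar_radial_integral f t1 r1 r2 + polar_angular_integral f r2 t1 t2"
proof -
  have radial: "polar_radial_integral f 0 1 r1 + polar_radial_integral f 0 r1 r2 = polar_radial_integral f 0 1 r2"
    unfolding polar_radial_integral_def
    using assms(3,4) closed_segment_subset_pos
    by (intro segment_integral_add[where S = "{0<..}"] continuous_intros continuous_on_polar_H_ray[OF cont])
      auto
  have angular: "polar_angular_integral f r2 0 t1 + polar_angular_integral f r2 t1 t2 = polar_angular_integral f r2 0 t2"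
    unfolding polar_angular_integral_def
    using assms(4)
    by (intro segment_integral_add[where S = UNIV] continuous_intros continuous_on_polar_H_circle[OF cont]) auto
  have "polar_rect_boundary_integral f r1 r2 0 t1 = 0"
    using closed assms(3,4) by blast
  then show ?thesis
    unfolding polar_primitive_def fst_conv snd_conv radial[symmetric] angular[symmetric]
      polar_rect_boundary_integral_eq_sides polar_radial_integral_reverse[of f t1 r2 r1]
      polar_angular_integral_reverse[of f r1 t1 0]
    by (simp add: algebra_simps)
qed

lemma polar_primitive_diff_linear:
  assumes cont: "continuous_on polar_H f"
    and closed: "\<And>a b c d. 0 < a \<Longrightarrow> 0 < b \<Longrightarrow> polar_rect_boundary_integral f a b c d = 0"
    and "0 < r0" "0 < r"
  shows "polar_primitive f (r, y) - polar_primitive f (r0, y0) - c * (of_real r * cis y - of_real r0 * cis y0)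
    = polar_radial_integral (\<lambda>p. f p - c) y0 r0 r + polar_angular_integral (\<lambda>p. f p - c) r y0 y"
  using polar_primitive_diff[OF cont closed assms(3,4), of y y0]
  unfolding polar_radial_integral_diff[OF cont continuous_on_const assms(3,4)]
    polar_angular_integral_diff[OF cont continuous_on_const assms(4)]
    polar_radial_integral_const polar_angular_integral_const
  by (simp add: algebra_simps)

lemma polar_primitive_increment_bound:
  assumes cont: "continuous_on polar_H f"
    and closed: "\<And>a b c d. 0 < a \<Longrightarrow> 0 < b \<Longrightarrow> polar_rect_boundary_integral f a b c d = 0"
    and r0: "0 < r0" and \<epsilon>: "0 < \<epsilon>"
  obtains \<delta> where "0 < \<delta>"
    "\<And>r y. 0 < r \<Longrightarrow> \<bar>r - r0\<bar> < \<delta> \<Longrightarrow> \<bar>y - y0\<bar> < \<delta> \<Longrightarrow>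
      norm (polar_primitive f (r, y) - polar_primitive f (r0, y0)
        - f (r0, y0) * (of_real r * cis y - of_real r0 * cis y0)) \<le> \<epsilon> * (\<bar>r - r0\<bar> + r * \<bar>y - y0\<bar>)"
proof -
  define c0 where "c0 = f (r0, y0)"
  define g where "g p = f p - c0" for p
  have cont_g: "continuous_on polar_H g"
    unfolding g_def using cont by (intro continuous_intros)
  have "(r0, y0) \<in> polar_H"
    using r0 by (simp add: polar_H_def)
  then obtain \<delta> where "0 < \<delta>" and close: "\<And>q. q \<in> polar_H \<Longrightarrow> dist q (r0, y0) < \<delta> \<Longrightarrow> norm (g q) < \<epsilon>"
    using cont \<epsilon> unfolding continuous_on_iff g_def c0_def dist_norm by blast
  show thesis
  proof (rule that[of "\<delta> / 2"])
    show "0 < \<delta> / 2"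
      using \<open>0 < \<delta>\<close> by simp
    fix r y assume r: "0 < r" and rr0: "\<bar>r - r0\<bar> < \<delta> / 2" and yy0: "\<bar>y - y0\<bar> < \<delta> / 2"
    have near: "norm (g (s, t)) \<le> \<epsilon>" if "0 < s" "\<bar>s - r0\<bar> \<le> \<bar>r - r0\<bar>" "\<bar>t - y0\<bar> \<le> \<bar>y - y0\<bar>" for s t
    proof -
      have "dist (s, t) (r0, y0) \<le> \<bar>s - r0\<bar> + \<bar>t - y0\<bar>"
        using sqrt_sum_squares_le_sum_abs[of "s - r0" "t - y0"] by (simp add: dist_Pair_Pair dist_real_def)
      then show ?thesis
        using close[of "(s, t)"] that rr0 yy0 by (simp add: polar_H_def)
    qed
    have radial: "norm (polar_radial_integral g y0 r0 r) \<le> \<epsilon> * \<bar>r - r0\<bar>"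
      using closed_segment_subset_pos[OF r0 r] dist_in_closed_segment[of _ r0 r]
      by (intro polar_radial_integral_bound[OF cont_g r0 r] near) (auto simp: dist_real_def abs_minus_commute)
    have angular: "norm (polar_angular_integral g r y0 y) \<le> \<epsilon> * r * \<bar>y - y0\<bar>"
      using dist_in_closed_segment[of _ y0 y]
      by (intro polar_angular_integral_bound[OF cont_g r] near r) (auto simp: dist_real_def abs_minus_commute)
    have "polar_primitive f (r, y) - polar_primitive f (r0, y0) - c0 * (of_real r * cis y - of_real r0 * cis y0)
        = polar_radial_integral g y0 r0 r + polar_angular_integral g r y0 y"
      unfolding g_def by (rule polar_primitive_diff_linear[OF cont closed r0 r])
    also have "norm \<dots> \<le> \<epsilon> * (\<bar>r - r0\<bar> + r * \<bar>y - y0\<bar>)"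
      using norm_triangle_le[OF add_mono[OF radial angular]] by (simp add: algebra_simps)
    finally show "norm (polar_primitive f (r, y) - polar_primitive f (r0, y0)
        - f (r0, y0) * (of_real r * cis y - of_real r0 * cis y0)) \<le> \<epsilon> * (\<bar>r - r0\<bar> + r * \<bar>y - y0\<bar>)"
      by (simp add: c0_def)
  qed
qed

lemma norm_exp_diff_le:
  assumes "cmod (w - w0) \<le> 1"
  shows "cmod (exp w - exp w0) \<le> exp (Re w0 + 1) * cmod (w - w0)"
proof (rule field_differentiable_bound[of "cball w0 1"])
  show "norm (exp z) \<le> exp (Re w0 + 1)" if "z \<in> cball w0 1" for z
    using that abs_Re_le_cmod[of "z - w0"] by (simp add: dist_norm norm_minus_commute)
qed (use assms in \<open>auto intro: DERIV_exp[THEN has_field_derivative_at_within] simp: dist_norm norm_minus_commute\<close>)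

lemma polar_primitive_exp_increment_bound:
  assumes cont: "continuous_on polar_H f"
    and closed: "\<And>a b c d. 0 < a \<Longrightarrow> 0 < b \<Longrightarrow> polar_rect_boundary_integral f a b c d = 0"
    and "0 < \<epsilon>"
  shows "\<forall>\<^sub>F w in at w0. norm (polar_primitive f (exp (Re w), Im w) - polar_primitive f (exp (Re w0), Im w0)
      - f (exp (Re w0), Im w0) * (exp w - exp w0)) \<le> \<epsilon> * cmod (w - w0)"
proof -
  define r0 where "r0 = exp (Re w0)"
  define y0 where "y0 = Im w0"
  define M where "M = exp (Re w0 + 1)"
  have "0 < r0" "0 < M"
    by (simp_all add: r0_def M_def)
  then obtain \<delta> where "0 < \<delta>" and bound: "\<And>r y. 0 < r \<Longrightarrow> \<bar>r - r0\<bar> < \<delta> \<Longrightarrow> \<bar>y - y0\<bar> < \<delta> \<Longrightarrow>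
      norm (polar_primitive f (r, y) - polar_primitive f (r0, y0) - f (r0, y0) * (of_real r * cis y - of_real r0 * cis y0))
        \<le> \<epsilon> / (2 * M) * (\<bar>r - r0\<bar> + r * \<bar>y - y0\<bar>)"
    using polar_primitive_increment_bound[OF cont closed, of r0 "\<epsilon> / (2 * M)"] \<open>0 < \<epsilon>\<close> by auto
  have "((\<lambda>w. exp (Re w)) \<longlongrightarrow> r0) (at w0)" "(Im \<longlongrightarrow> y0) (at w0)"
    unfolding r0_def y0_def by (auto intro!: tendsto_eq_intros)
  from this[THEN tendstoD, OF \<open>0 < \<delta>\<close>] tendstoD[OF tendsto_ident_at zero_less_one]
  have "\<forall>\<^sub>F w in at w0. dist w w0 < 1 \<and> \<bar>exp (Re w) - r0\<bar> < \<delta> \<and> \<bar>Im w - y0\<bar> < \<delta>"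
    by (auto simp: dist_real_def intro!: eventually_conj)
  then show ?thesis
  proof eventually_elim
    case (elim w)
    define r where "r = exp (Re w)"
    have "\<bar>r - r0\<bar> \<le> cmod (exp w - exp w0)"
      using norm_triangle_ineq3[of "exp w" "exp w0"] by (simp add: r_def r0_def)
    also have "\<dots> \<le> M * cmod (w - w0)"
      using norm_exp_diff_le[of w w0] elim by (simp add: M_def dist_norm)
    finally have radial: "\<bar>r - r0\<bar> \<le> M * cmod (w - w0)" .
    have "r \<le> M" "\<bar>Im w - y0\<bar> \<le> cmod (w - w0)"
      using elim abs_Re_le_cmod[of "w - w0"] abs_Im_le_cmod[of "w - w0"]
      by (auto simp: r_def M_def y0_def dist_norm)
    then have angular: "r * \<bar>Im w - y0\<bar> \<le> M * cmod (w - w0)"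
      using \<open>0 < M\<close> by (intro mult_mono) auto
    have exp_polar: "exp w - exp w0 = of_real r * cis (Im w) - of_real r0 * cis y0"
      by (simp add: r_def r0_def y0_def exp_eq_polar[of w] exp_eq_polar[of w0])
    have "norm (polar_primitive f (r, Im w) - polar_primitive f (r0, y0) - f (r0, y0) * (exp w - exp w0))
        \<le> \<epsilon> / (2 * M) * (\<bar>r - r0\<bar> + r * \<bar>Im w - y0\<bar>)"
      unfolding exp_polar by (rule bound) (use elim in \<open>auto simp: r_def\<close>)
    also have "\<dots> \<le> \<epsilon> / (2 * M) * (2 * M * cmod (w - w0))"
      using radial angular \<open>0 < \<epsilon>\<close> \<open>0 < M\<close> by (intro mult_left_mono) auto
    also have "\<dots> = \<epsilon> * cmod (w - w0)"
      using \<open>0 < M\<close> by simp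
    finally show ?case
      by (simp add: r_def r0_def y0_def)
  qed
qed

lemma polar_primitive_exp_has_field_derivative:
  assumes cont: "continuous_on polar_H f"
    and closed: "\<And>a b c d. 0 < a \<Longrightarrow> 0 < b \<Longrightarrow> polar_rect_boundary_integral f a b c d = 0"
  shows "((\<lambda>w. polar_primitive f (exp (Re w), Im w)) has_field_derivative f (exp (Re w0), Im w0) * exp w0) (at w0)"
proof -
  define c0 where "c0 = f (exp (Re w0), Im w0)"
  define K where "K w = polar_primitive f (exp (Re w), Im w) - c0 * exp w" for w
  have "((\<lambda>w. (K w - K w0) / (w - w0)) \<longlongrightarrow> 0) (at w0)"
  proof (rule tendstoI)
    fix e :: real assume "0 < e"
    then have "\<forall>\<^sub>F w in at w0. norm (K w - K w0) \<le> e / 2 * cmod (w - w0)"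
      using polar_primitive_exp_increment_bound[OF cont closed, of "e / 2"]
      by (simp add: K_def c0_def algebra_simps)
    then show "\<forall>\<^sub>F w in at w0. dist ((K w - K w0) / (w - w0)) 0 < e"
    proof (rule eventually_mono)
      fix w assume bound: "norm (K w - K w0) \<le> e / 2 * cmod (w - w0)"
      show "dist ((K w - K w0) / (w - w0)) 0 < e"
      proof (cases "w = w0")
        case False
        then have "0 < e * cmod (w - w0)"
          using \<open>0 < e\<close> by simp
        with bound have "norm (K w - K w0) < e * cmod (w - w0)"
          by linarith
        with False show ?thesis
          by (simp add: dist_norm norm_divide divide_simps)
      qed (use \<open>0 < e\<close> in simp)
    qed
  qed
  then have "(K has_field_derivative 0) (at w0)"
    by (simp add: has_field_derivative_iff)
  then have "((\<lambda>w. K w + c0 * exp w) has_field_derivative 0 + c0 * exp w0) (at w0)"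
    by (auto intro!: derivative_eq_intros)
  then show ?thesis
    by (simp add: K_def c0_def)
qed

lemma holomorphic_on_polar_exp:
  assumes cont: "continuous_on polar_H f"
    and closed: "\<And>a b c d. 0 < a \<Longrightarrow> 0 < b \<Longrightarrow> polar_rect_boundary_integral f a b c d = 0"
  shows "(\<lambda>w. f (exp (Re w), Im w)) holomorphic_on UNIV"
proof -
  let ?F = "\<lambda>w. polar_primitive f (exp (Re w), Im w)"
  have F: "(?F has_field_derivative f (exp (Re w), Im w) * exp w) (at w)" for w
    by (rule polar_primitive_exp_has_field_derivative[OF cont closed])
  then have "?F holomorphic_on UNIV"
    by (auto simp: holomorphic_on_open)
  then have "(\<lambda>w. deriv ?F w * exp (- w)) holomorphic_on UNIV"
    by (intro holomorphic_intros) auto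
  moreover have "deriv ?F w * exp (- w) = f (exp (Re w), Im w)" for w
    using DERIV_imp_deriv[OF F] by (simp add: exp_minus_inverse)
  ultimately show ?thesis
    by simp
qed

lemma tendsto_difference_quotient_over_exp:
  assumes "(h has_field_derivative D) (at w0)"
  shows "((\<lambda>w. (h w - h w0) / (exp w - exp w0)) \<longlongrightarrow> D / exp w0) (at w0)"
proof -
  \<comment> \<open>This holds even where \<open>exp w = exp w0\<close>, since \<open>x / 0 = 0\<close>.\<close>
  have quotients: "((h w - h w0) / (w - w0)) / ((exp w - exp w0) / (w - w0)) = (h w - h w0) / (exp w - exp w0)"
    for w
    by (cases "w = w0"; cases "exp w = exp w0") simp_all
  show ?thesis
    using assms DERIV_exp[of w0]
      tendsto_divide[of "\<lambda>w. (h w - h w0) / (w - w0)" _ _ "\<lambda>w. (exp w - exp w0) / (w - w0)"]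
    unfolding quotients by (simp add: has_field_derivative_iff)
qed

lemma polar_analytic_if_holomorphic_exp:
  assumes "(\<lambda>w. f (exp (Re w), Im w)) holomorphic_on UNIV"
  shows "polar_analytic f"
  unfolding polar_analytic_def
proof
  fix p0 assume p0: "p0 \<in> polar_H"
  define h where "h w = f (exp (Re w), Im w)" for w
  define log_polar where "log_polar p = Complex (ln (fst p)) (snd p)" for p :: "real \<times> real"
  define S where "S = {p \<in> polar_H. polar_pt p \<noteq> polar_pt p0}"
  define w0 where "w0 = log_polar p0"
  have polar_pt_eq: "polar_pt p = exp (log_polar p)" and f_eq: "f p = h (log_polar p)" if "p \<in> polar_H" for p
    using that by (auto simp: polar_pt_def polar_H_def log_polar_def h_def exp_eq_polar)
  have "h holomorphic_on UNIV"
    using assms by (simp add: h_def[abs_def])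
  then have "(h has_field_derivative deriv h w0) (at w0)"
    by (simp add: DERIV_deriv_iff_field_differentiable holomorphic_on_imp_differentiable_at)
  then have quotient: "((\<lambda>w. (h w - h w0) / (exp w - exp w0)) \<longlongrightarrow> deriv h w0 / exp w0) (at w0)"
    by (rule tendsto_difference_quotient_over_exp)
  have "filterlim log_polar (at w0) (at p0 within S)"
    unfolding filterlim_at
  proof
    show "eventually (\<lambda>p. log_polar p \<in> UNIV \<and> log_polar p \<noteq> w0) (at p0 within S)"
      unfolding eventually_at_filter
      by (rule always_eventually) (auto simp: S_def w0_def polar_pt_eq p0)
    show "(log_polar \<longlongrightarrow> w0) (at p0 within S)"
      using p0 unfolding w0_def log_polar_def polar_H_def by (auto intro!: tendsto_intros)
  qed
  from filterlim_compose[OF quotient this]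
  have "((\<lambda>p. (h (log_polar p) - h w0) / (exp (log_polar p) - exp w0)) \<longlongrightarrow> deriv h w0 / exp w0) (at p0 within S)" .
  moreover have "eventually (\<lambda>p. (h (log_polar p) - h w0) / (exp (log_polar p) - exp w0)
      = (f p - f p0) / (polar_pt p - polar_pt p0)) (at p0 within S)"
    unfolding eventually_at_filter
    by (rule always_eventually) (auto simp: S_def w0_def polar_pt_eq f_eq p0)
  ultimately have "((\<lambda>p. (f p - f p0) / (polar_pt p - polar_pt p0)) \<longlongrightarrow> deriv h w0 / exp w0) (at p0 within S)"
    by (rule Lim_transform_eventually)
  then show "\<exists>L. ((\<lambda>p. (f p - f p0) / (polar_pt p - polar_pt p0)) \<longlongrightarrow> L)
      (at p0 within {p \<in> polar_H. polar_pt p \<noteq> polar_pt p0})"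
    unfolding S_def by blast
qed

theorem proposition3:
  fixes f :: "real \<times> real \<Rightarrow> complex"
  assumes "continuous_on polar_H f"
    and "\<And>a b c d. 0 < a \<Longrightarrow> a < b \<Longrightarrow> c < d \<Longrightarrow> polar_rect_boundary_integral f a b c d = 0"
  shows "polar_analytic f"
proof -
  have "\<And>a b c d. 0 < a \<Longrightarrow> 0 < b \<Longrightarrow> polar_rect_boundary_integral f a b c d = 0"
    using assms(2) by (rule polar_rect_boundary_integral_eq_0)
  then have "(\<lambda>w. f (exp (Re w), Im w)) holomorphic_on UNIV"
    by (rule holomorphic_on_polar_exp[OF assms(1)])
  then show ?thesis
    by (rule polar_analytic_if_holomorphic_exp)
qed

end
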